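(* Let $1\le q<p$, $k\in\mathbb{N}$, and $x\in\mathbb{R}^n\setminus\{0\}$. (1) Let $\varepsilon>0$. If $x$ is $(k,\varepsilon)$-$\ell_p$-compressible, then $\Delta_{q,p}(x)\ge\frac{1}{(k/n)^{1/q-1/p}+\varepsilon}$. (2) The vector $x$ is $\left(k,\frac{(n/k)^{1/q}}{\Delta_{q,p}(x)}\right)$-$\ell_p$-compressible. In particular, if a subspace $X\subseteq\mathbb{R}^n$ is $(k,\varepsilon)$-$\ell_p$-spread, then $\Delta_{q,p}(X)\le\frac{1}{\varepsilon}\left(\frac{n}{k}\right)^{1/q}$ for all $1\le q<p$.
   Context: A vector $y$ is $k$-sparse if $|\mathrm{supp}(y)|\le k$. A nonzero $x$ is $(k,\varepsilon)$-$\ell_p$-compressible if some $k$-sparse $y$ has $\|x-y\|_p\le\varepsilon\|x\|_p$, and $(k,\varepsilon)$-$\ell_p$-spread otherwise; a subspace is $(k,\varepsilon)$-$\ell_p$-spread if all its nonzero vectors are. For nonzero $x\in\mathbb{R}^n$, $\Delta_{q,p}(x):=\frac{\|x\|_p\, n^{1/q-1/p}}{\|x\|_q}$, and for a subspace $X$, $\Delta_{q,p}(X):=\sup\{\Delta_{q,p}(x):x\in X\setminus\{0\}\}$. *)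

theory Defs
  imports "HOL-Analysis.Analysis"
begin

text \<open>Vectors in R^n are modelled as real^'n with n = CARD('n).\<close>

definition lp_norm :: "real \<Rightarrow> real^'n \<Rightarrow> real" where
  "lp_norm p x = (\<Sum>i\<in>UNIV. \<bar>x $ i\<bar> powr p) powr (1 / p)"

definition k_sparse :: "nat \<Rightarrow> real^'n \<Rightarrow> bool" where
  "k_sparse k y \<longleftrightarrow> card {i. y $ i \<noteq> 0} \<le> k"

definition lp_compressible :: "real \<Rightarrow> nat \<Rightarrow> real \<Rightarrow> real^'n \<Rightarrow> bool" where
  "lp_compressible p k \<epsilon> x \<longleftrightarrow> x \<noteq> 0 \<and>
     (\<exists>y. k_sparse k y \<and> lp_norm p (x - y) \<le> \<epsilon> * lp_norm p x)"

definition lp_spread :: "real \<Rightarrow> nat \<Rightarrow> real \<Rightarrow> real^'n \<Rightarrow> bool" where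
  "lp_spread p k \<epsilon> x \<longleftrightarrow> x \<noteq> 0 \<and> \<not> lp_compressible p k \<epsilon> x"

definition subspace_lp_spread :: "real \<Rightarrow> nat \<Rightarrow> real \<Rightarrow> (real^'n) set \<Rightarrow> bool" where
  "subspace_lp_spread p k \<epsilon> X \<longleftrightarrow> (\<forall>x\<in>X. x \<noteq> 0 \<longrightarrow> lp_spread p k \<epsilon> x)"

definition Delta :: "real \<Rightarrow> real \<Rightarrow> real^'n \<Rightarrow> real" where
  "Delta q p x = lp_norm p x * real CARD('n) powr (1 / q - 1 / p) / lp_norm q x"

text \<open>Supremum taken in the extended reals (sup of the empty set is -\<infinity>).\<close>
definition Delta_sub :: "real \<Rightarrow> real \<Rightarrow> (real^'n) set \<Rightarrow> ereal" where
  "Delta_sub q p X = (SUP x\<in>X - {0}. ereal (Delta q p x))"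

end

theory Submission imports Defs begin

(*
  (1) Let y be k-sparse with support S and |x - y|_p <= eps |x|_p. On S, Hoelder's
  inequality gives |x_S|_q <= k^(1/q - 1/p) |x|_p; off S the vector x agrees with x - y,
  so |x_(-S)|_q <= n^(1/q - 1/p) eps |x|_p, and |x|_q <= |x_S|_q + |x_(-S)|_q since q >= 1.
  (2) Keep the entries with |x_i|^q > |x|_q^q / k: by Markov's inequality there are at
  most k of them, and every other entry is at most |x|_q / k^(1/q), so the discarded
  part has l_p-norm at most n^(1/p) |x|_q / k^(1/q), which is the claimed level times |x|_p.
  (3) A spread vector is not compressible at any level <= eps, so by (2) its level
  (n/k)^(1/q) / Delta_qp(x) exceeds eps.
*)

lemma Youngs_inequality_one:
  fixes u r :: real
  assumes "r > 1" "u \<ge> 0"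
  shows "u \<le> u powr r / r + (1 - 1/r)"
proof -
  have "u * 1 \<le> u powr r / r + 1 powr (r/(r-1)) / (r/(r-1))"
    by (rule Youngs_inequality) (use assms in \<open>auto simp: field_simps\<close>)
  then show ?thesis using assms by (simp add: field_simps)
qed

lemma sum_le_card_powr_mul_sum_powr:
  fixes f :: "'a \<Rightarrow> real"
  assumes "finite A" "\<And>i. f i \<ge> 0" "r > 1"
  shows "sum f A \<le> real (card A) powr (1 - 1/r) * (\<Sum>i\<in>A. f i powr r) powr (1/r)"
proof (cases "(\<Sum>i\<in>A. f i powr r) = 0")
  case True
  then have "\<forall>i\<in>A. f i = 0"
    using sum_nonneg_eq_0_iff[OF assms(1), of "\<lambda>i. f i powr r"] by simp
  then show ?thesis by simp
next
  case False
  define T where "T = (\<Sum>i\<in>A. f i powr r)"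
  define m where "m = real (card A)"
  define M where "M = (T/m) powr (1/r)"
  have T_pos: "T > 0" using False by (simp add: T_def less_le sum_nonneg)
  have m_pos: "m > 0" using False assms(1) by (auto simp: m_def card_gt_0_iff)
  have M_pos: "M > 0" using T_pos m_pos by (simp add: M_def)
  have M_powr: "M powr r = T/m" using T_pos m_pos assms(3) by (simp add: M_def powr_powr)
  \<comment> \<open>Young's inequality for each normalised entry f i / M, whose r-th powers average to 1.\<close>
  have "(\<Sum>i\<in>A. f i / M) \<le> (\<Sum>i\<in>A. (f i / M) powr r / r + (1 - 1/r))"
    by (rule sum_mono, rule Youngs_inequality_one) (use assms M_pos in auto)
  also have "\<dots> = T / (M powr r) / r + m * (1 - 1/r)"
    using M_pos assms(2) by (simp add: T_def m_def powr_divide sum.distrib sum_divide_distrib)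
  also have "\<dots> = m"
    unfolding M_powr using T_pos m_pos assms(3) by (simp add: field_simps)
  finally have "sum f A / M \<le> m" by (simp add: sum_divide_distrib)
  then have "sum f A \<le> m * M" using M_pos by (simp add: field_simps)
  also have "m * M = m powr (1 - 1/r) * T powr (1/r)"
    using m_pos T_pos by (simp add: M_def powr_divide powr_diff field_simps)
  finally show ?thesis by (simp add: m_def T_def)
qed

lemma powr_add_le_add_powr:
  fixes a b s :: real
  assumes "a \<ge> 0" "b \<ge> 0" "0 < s" "s \<le> 1"
  shows "(a + b) powr s \<le> a powr s + b powr s"
proof (cases "a + b = 0")
  case True
  then show ?thesis using assms by simp
next
  case False
  then have ab: "a + b > 0" using assms by simp
  have "a/(a+b) \<le> (a/(a+b)) powr s" "b/(a+b) \<le> (b/(a+b)) powr s"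
    using powr_mono'[of s 1 "a/(a+b)"] powr_mono'[of s 1 "b/(a+b)"] assms ab by auto
  moreover have "a/(a+b) + b/(a+b) = 1" using ab by (simp add: add_divide_distrib[symmetric])
  ultimately have "1 \<le> (a/(a+b)) powr s + (b/(a+b)) powr s" by linarith
  also have "\<dots> = (a powr s + b powr s) / (a+b) powr s"
    using assms ab by (simp add: powr_divide add_divide_distrib)
  finally show ?thesis using ab by (simp add: field_simps)
qed

definition lp_norm_on :: "real \<Rightarrow> 'a set \<Rightarrow> ('a \<Rightarrow> real) \<Rightarrow> real" where
  "lp_norm_on p A f = (\<Sum>i\<in>A. \<bar>f i\<bar> powr p) powr (1 / p)"

lemma lp_norm_eq_lp_norm_on: "lp_norm p x = lp_norm_on p UNIV (($) x)"
  by (simp add: lp_norm_def lp_norm_on_def)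

lemma lp_norm_on_cong: "(\<And>i. i \<in> A \<Longrightarrow> f i = g i) \<Longrightarrow> lp_norm_on p A f = lp_norm_on p A g"
  unfolding lp_norm_on_def by (metis (no_types, lifting) sum.cong)

lemma lp_norm_on_mono_set:
  assumes "finite B" "A \<subseteq> B" "p > 0"
  shows "lp_norm_on p A f \<le> lp_norm_on p B f"
  unfolding lp_norm_on_def using assms
  by (intro powr_mono2 sum_mono2) (auto intro: sum_nonneg)

lemma lp_norm_on_Un_le:
  assumes "finite A" "finite B" "A \<inter> B = {}" "p \<ge> 1"
  shows "lp_norm_on p (A \<union> B) f \<le> lp_norm_on p A f + lp_norm_on p B f"
  unfolding lp_norm_on_def using assms
  by (simp add: sum.union_disjoint powr_add_le_add_powr sum_nonneg)

lemma lp_norm_on_le_card_powr_mul: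
  assumes "finite A" "0 < q" "q < p"
  shows "lp_norm_on q A f \<le> real (card A) powr (1/q - 1/p) * lp_norm_on p A f"
proof -
  have "(\<Sum>i\<in>A. \<bar>f i\<bar> powr q) \<le> real (card A) powr (1 - 1/(p/q)) *
      (\<Sum>i\<in>A. (\<bar>f i\<bar> powr q) powr (p/q)) powr (1/(p/q))"
    by (rule sum_le_card_powr_mul_sum_powr) (use assms in auto)
  also have "(\<Sum>i\<in>A. (\<bar>f i\<bar> powr q) powr (p/q)) = (\<Sum>i\<in>A. \<bar>f i\<bar> powr p)"
    using assms by (simp add: powr_powr)
  finally have "(\<Sum>i\<in>A. \<bar>f i\<bar> powr q) \<le> real (card A) powr (1 - q/p) *
      (\<Sum>i\<in>A. \<bar>f i\<bar> powr p) powr (q/p)" by simp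
  then have "lp_norm_on q A f \<le> (real (card A) powr (1 - q/p) *
      (\<Sum>i\<in>A. \<bar>f i\<bar> powr p) powr (q/p)) powr (1/q)"
    unfolding lp_norm_on_def using assms by (intro powr_mono2) (auto intro: sum_nonneg)
  also have "\<dots> = real (card A) powr ((1 - q/p)/q) * (\<Sum>i\<in>A. \<bar>f i\<bar> powr p) powr (q/p/q)"
    by (simp add: powr_mult powr_powr sum_nonneg)
  also have "(1 - q/p)/q = 1/q - 1/p" using assms by (simp add: field_simps)
  also have "q/p/q = 1/p" using assms by simp
  finally show ?thesis by (simp add: lp_norm_on_def)
qed

lemma lp_norm_on_le_card_powr_mul_bound:
  assumes "finite A" "p > 0" "\<And>i. i \<in> A \<Longrightarrow> \<bar>f i\<bar> \<le> t"
  shows "lp_norm_on p A f \<le> real (card A) powr (1/p) * t"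
proof (cases "A = {}")
  case False
  then have t: "t \<ge> 0" using assms(3) by force
  have "lp_norm_on p A f \<le> (\<Sum>i\<in>A. t powr p) powr (1/p)"
    unfolding lp_norm_on_def using assms
    by (intro powr_mono2 sum_mono) (auto intro: sum_nonneg powr_mono2)
  also have "\<dots> = real (card A) powr (1/p) * t"
    using t assms(2) by (simp add: powr_mult powr_powr)
  finally show ?thesis .
qed (simp add: lp_norm_on_def)

lemma card_gt_mul_le_sum:
  fixes f :: "'a \<Rightarrow> real"
  assumes "finite A" "\<And>i. f i \<ge> 0"
  shows "real (card {i\<in>A. c < f i}) * c \<le> sum f A"
proof -
  have "real (card {i\<in>A. c < f i}) * c = (\<Sum>i\<in>{i\<in>A. c < f i}. c)" by simp
  also have "\<dots> \<le> (\<Sum>i\<in>{i\<in>A. c < f i}. f i)" by (rule sum_mono) simp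
  also have "\<dots> \<le> sum f A" using assms by (intro sum_mono2) auto
  finally show ?thesis .
qed

lemma lp_norm_pos:
  fixes x :: "real^'n"
  assumes "x \<noteq> 0" "p > 0"
  shows "lp_norm p x > 0"
proof -
  obtain j where j: "x $ j \<noteq> 0" using assms(1) by (metis vec_eq_iff zero_index)
  have "0 < \<bar>x $ j\<bar> powr p" using j by simp
  also have "\<dots> \<le> (\<Sum>i\<in>UNIV. \<bar>x $ i\<bar> powr p)" by (rule member_le_sum) auto
  finally show ?thesis unfolding lp_norm_def by simp
qed

lemma Delta_pos:
  fixes x :: "real^'n"
  assumes "0 < q" "0 < p" "x \<noteq> 0"
  shows "Delta q p x > 0"
  using lp_norm_pos[OF assms(3), of p] lp_norm_pos[OF assms(3), of q] assms
  unfolding Delta_def by simp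

lemma lp_norm_le_sparse_approx:
  fixes x y :: "real^'n"
  assumes "1 \<le> q" "q < p" "k_sparse k y"
  shows "lp_norm q x \<le>
    real k powr (1/q - 1/p) * lp_norm p x + real CARD('n) powr (1/q - 1/p) * lp_norm p (x - y)"
proof -
  define S where "S = {i. y $ i \<noteq> 0}"
  define a where "a = 1/q - 1/p"
  have a_pos: "a > 0" using assms by (simp add: a_def field_simps)
  have card_S: "card S \<le> k" using assms(3) by (simp add: k_sparse_def S_def)
  have "lp_norm q x = lp_norm_on q (S \<union> -S) (($) x)"
    by (simp add: lp_norm_eq_lp_norm_on)
  also have "\<dots> \<le> lp_norm_on q S (($) x) + lp_norm_on q (-S) (($) x)"
    using assms by (intro lp_norm_on_Un_le) auto
  also have "\<dots> \<le> real (card S) powr a * lp_norm_on p S (($) x)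
      + real (card (-S)) powr a * lp_norm_on p (-S) (($) x)"
    unfolding a_def using assms by (intro add_mono lp_norm_on_le_card_powr_mul) auto
  also have "\<dots> \<le> real k powr a * lp_norm p x + real CARD('n) powr a * lp_norm p (x - y)"
  proof (intro add_mono mult_mono)
    show "real (card S) powr a \<le> real k powr a"
      using card_S a_pos by (intro powr_mono2) auto
    show "real (card (-S)) powr a \<le> real CARD('n) powr a"
      using a_pos by (intro powr_mono2) (auto simp: card_mono)
    show "lp_norm_on p S (($) x) \<le> lp_norm p x"
      unfolding lp_norm_eq_lp_norm_on using assms by (intro lp_norm_on_mono_set) auto
    have "lp_norm_on p (-S) (($) x) = lp_norm_on p (-S) (($) (x - y))"
      by (rule lp_norm_on_cong) (simp add: S_def)
    also have "\<dots> \<le> lp_norm p (x - y)"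
      unfolding lp_norm_eq_lp_norm_on using assms by (intro lp_norm_on_mono_set) auto
    finally show "lp_norm_on p (-S) (($) x) \<le> lp_norm p (x - y)" .
  qed (auto simp: lp_norm_def lp_norm_on_def)
  finally show ?thesis by (simp add: a_def)
qed

lemma Delta_ge_if_lp_compressible:
  fixes x :: "real^'n"
  assumes "1 \<le> q" "q < p" "\<epsilon> > 0" "lp_compressible p k \<epsilon> x"
  shows "Delta q p x \<ge> 1 / ((real k / real CARD('n)) powr (1/q - 1/p) + \<epsilon>)"
proof -
  obtain y where "k_sparse k y" and y: "lp_norm p (x - y) \<le> \<epsilon> * lp_norm p x"
    and x: "x \<noteq> 0" using assms(4) unfolding lp_compressible_def by blast
  define a where "a = 1/q - 1/p"
  define n where "n = real CARD('n)"
  define K where "K = real k powr a + n powr a * \<epsilon>"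
  have P_pos: "lp_norm p x > 0" and Q_pos: "lp_norm q x > 0"
    using lp_norm_pos[OF x] assms by auto
  have na_pos: "n powr a > 0" by (simp add: n_def)
  have K_pos: "K > 0" unfolding K_def using na_pos assms(3) by (simp add: add_nonneg_pos)
  have "lp_norm q x \<le> real k powr a * lp_norm p x + n powr a * lp_norm p (x - y)"
    unfolding a_def n_def by (rule lp_norm_le_sparse_approx) fact+
  also have "\<dots> \<le> K * lp_norm p x"
    using mult_left_mono[OF y less_imp_le[OF na_pos]] by (simp add: K_def algebra_simps)
  finally have Q_le: "lp_norm q x \<le> K * lp_norm p x" .
  have "1 / ((real k / n) powr a + \<epsilon>) = n powr a / K"
    using na_pos by (simp add: K_def powr_divide field_simps)
  also have "\<dots> \<le> lp_norm p x * n powr a / lp_norm q x"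
    using Q_le na_pos K_pos Q_pos P_pos by (simp add: field_simps mult_left_mono)
  finally show ?thesis by (simp add: Delta_def a_def n_def)
qed

lemma lp_compressible_at_Delta_level:
  fixes x :: "real^'n"
  assumes "1 \<le> q" "q < p" "x \<noteq> 0" "k \<ge> 1"
  shows "lp_compressible p k ((real CARD('n) / real k) powr (1/q) / Delta q p x) x"
proof -
  define Q where "Q = (\<Sum>i\<in>UNIV. \<bar>x $ i\<bar> powr q)"
  define n where "n = real CARD('n)"
  define S where "S = {i. Q / real k < \<bar>x $ i\<bar> powr q}"
  define y :: "real^'n" where "y = (\<chi> i. if i \<in> S then x $ i else 0)"
  have Q_norm: "lp_norm q x = Q powr (1/q)" by (simp add: lp_norm_def Q_def)
  have Q_pos: "Q > 0"
    using lp_norm_pos[OF assms(3), of q] assms(1) Q_norm sum_nonneg[of UNIV "\<lambda>i. \<bar>x $ i\<bar> powr q"]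
    by (auto simp: Q_def less_le)
  have k_pos: "real k > 0" using assms(4) by simp
  have "real (card S) * (Q / real k) \<le> Q"
    using card_gt_mul_le_sum[of UNIV "\<lambda>i. \<bar>x $ i\<bar> powr q" "Q / real k"] by (simp add: S_def Q_def)
  then have "card S \<le> k" using Q_pos k_pos by (simp add: field_simps)
  then have "k_sparse k y" unfolding k_sparse_def
    by (rule le_trans[rotated], intro card_mono) (auto simp: y_def)
  have small: "\<bar>(x - y) $ i\<bar> \<le> Q powr (1/q) / real k powr (1/q)" for i
  proof (cases "i \<in> S")
    case False
    then have "(\<bar>x $ i\<bar> powr q) powr (1/q) \<le> (Q / real k) powr (1/q)"
      using assms(1) by (intro powr_mono2) (auto simp: S_def)
    then show ?thesis using False assms(1) Q_pos by (simp add: y_def powr_powr powr_divide)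
  qed (simp add: y_def)
  have "lp_norm p (x - y) \<le> n powr (1/p) * (Q powr (1/q) / real k powr (1/q))"
    unfolding lp_norm_eq_lp_norm_on n_def using assms small
    by (intro lp_norm_on_le_card_powr_mul_bound) auto
  also have "\<dots> = (n / real k) powr (1/q) / Delta q p x * lp_norm p x"
  proof -
    have "lp_norm p x > 0" using lp_norm_pos[OF assms(3)] assms by simp
    moreover have "n powr (1/q) = n powr (1/p) * n powr (1/q - 1/p)"
      by (simp add: n_def powr_add[symmetric])
    ultimately show ?thesis
      unfolding Delta_def n_def[symmetric] Q_norm using Q_pos k_pos
      by (simp add: powr_divide field_simps)
  qed
  finally show ?thesis unfolding lp_compressible_def n_def using assms(3) \<open>k_sparse k y\<close> by auto
qed

lemma lp_compressible_mono:
  assumes "lp_compressible p k \<epsilon> x" "\<epsilon> \<le> \<delta>"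
  shows "lp_compressible p k \<delta> x"
proof -
  have "lp_norm p x \<ge> 0" by (simp add: lp_norm_def)
  then show ?thesis
    using assms order_trans[OF _ mult_right_mono] unfolding lp_compressible_def by blast
qed

lemma Delta_le_if_lp_spread:
  fixes x :: "real^'n"
  assumes "1 \<le> q" "q < p" "k \<ge> 1" "\<epsilon> > 0" "lp_spread p k \<epsilon> x"
  shows "Delta q p x \<le> 1 / \<epsilon> * (real CARD('n) / real k) powr (1/q)"
proof -
  define c where "c = (real CARD('n) / real k) powr (1/q)"
  have x: "x \<noteq> 0" and not_compr: "\<not> lp_compressible p k \<epsilon> x"
    using assms(5) by (auto simp: lp_spread_def)
  have "lp_compressible p k (c / Delta q p x) x"
    unfolding c_def using lp_compressible_at_Delta_level[OF assms(1,2) x assms(3)] .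
  then have "\<not> c / Delta q p x \<le> \<epsilon>" using not_compr lp_compressible_mono by blast
  moreover have "Delta q p x > 0" using Delta_pos[OF _ _ x] assms by auto
  ultimately show ?thesis using assms(4) by (simp add: c_def field_simps)
qed

lemma Delta_sub_le_if_subspace_lp_spread:
  fixes X :: "(real^'n) set"
  assumes "1 \<le> q" "q < p" "k \<ge> 1" "\<epsilon> > 0" "subspace_lp_spread p k \<epsilon> X"
  shows "Delta_sub q p X \<le> ereal (1 / \<epsilon> * (real CARD('n) / real k) powr (1/q))"
  unfolding Delta_sub_def
proof (rule SUP_least)
  fix x assume "x \<in> X - {0}"
  then have "lp_spread p k \<epsilon> x" using assms(5) by (simp add: subspace_lp_spread_def)
  then show "ereal (Delta q p x) \<le> ereal (1 / \<epsilon> * (real CARD('n) / real k) powr (1/q))"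
    using Delta_le_if_lp_spread[OF assms(1-4)] by simp
qed

theorem proposition3p11:
  fixes x :: "real^'n" and p q :: real and k :: nat
  assumes "1 \<le> q" and "q < p" and "x \<noteq> 0"
  shows "(\<forall>\<epsilon>>0. lp_compressible p k \<epsilon> x \<longrightarrow>
            Delta q p x \<ge> 1 / ((real k / real CARD('n)) powr (1 / q - 1 / p) + \<epsilon>))
       \<and> (k \<ge> 1 \<longrightarrow>
            lp_compressible p k ((real CARD('n) / real k) powr (1 / q) / Delta q p x) x)
       \<and> (\<forall>(X :: (real^'n) set) \<epsilon>. k \<ge> 1 \<and> subspace X \<and> \<epsilon> > 0 \<and> subspace_lp_spread p k \<epsilon> X \<longrightarrow>
            Delta_sub q p X \<le> ereal (1 / \<epsilon> * (real CARD('n) / real k) powr (1 / q)))"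
  using Delta_ge_if_lp_compressible[OF assms(1,2)] lp_compressible_at_Delta_level[OF assms]
    Delta_sub_le_if_subspace_lp_spread[OF assms(1,2)]
  by blast

end
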